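(* Let $p\ge 1$ be an integer, $t\ge 2$, let $n_1,\dots,n_t$ be positive integers, and let $G=K_{n_1,\dots,n_t}$ be the complete $t$-partite graph with partite sets $V_1,\dots,V_t$, $|V_i|=n_i$. Let $N_t=\{1,\dots,t\}$ and $f(I)=\sum_{i\in I}n_i$ for $I\subseteq N_t$, and assume $f(N_t)>p$. Then $$\gamma_p(G)=\min\{s_1,\ p+s_2\}.$$
   Context: A set $S\subseteq V(G)$ is a $p$-dominating set of $G$ if every vertex $v\in V(G)\setminus S$ has at least $p$ neighbors in $S$; $\gamma_p(G)$ is the minimum cardinality of a $p$-dominating set of $G$. Define $s_1=\min\{f(I): I\subseteq N_t,\ f(I)\ge p\}$. Define the family $$\mathscr{I}_p=\Big\{I\subset N_t:\ |I|\le t-2,\ f(I)<p,\ \text{and } \Big\lceil\tfrac{p-f(I)}{t-|I|-1}\Big\rceil\le n_i \text{ for each } i\in N_t\setminus I\Big\},$$ and $s_2=\min\{\lceil\frac{p-f(I)}{t-|I|-1}\rceil: I\in\mathscr{I}_p\}$ if $\mathscr{I}_p\ne\emptyset$, and $s_2=\infty$ if $\mathscr{I}_p=\emptyset$. *)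

theory Defs
  imports Main "HOL-Library.Extended_Nat"
begin

text \<open>A graph is given by a vertex set V and a symmetric adjacency relation E.\<close>

definition p_dominating :: "'a set \<Rightarrow> ('a \<Rightarrow> 'a \<Rightarrow> bool) \<Rightarrow> nat \<Rightarrow> 'a set \<Rightarrow> bool" where
  "p_dominating V E p S \<longleftrightarrow> S \<subseteq> V \<and> (\<forall>v \<in> V - S. card {u \<in> S. E v u} \<ge> p)"

definition gamma_p :: "'a set \<Rightarrow> ('a \<Rightarrow> 'a \<Rightarrow> bool) \<Rightarrow> nat \<Rightarrow> nat" where
  "gamma_p V E p = Min {card S | S. p_dominating V E p S}"

text \<open>Complete t-partite graph K_{n_1,...,n_t}: vertex (i,j) lies in part V_i, j < n i;
  two vertices are adjacent iff they lie in different parts.\<close>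

definition kpart_V :: "nat \<Rightarrow> (nat \<Rightarrow> nat) \<Rightarrow> (nat \<times> nat) set" where
  "kpart_V t n = {(i, j). i \<in> {1..t} \<and> j < n i}"

definition kpart_E :: "nat \<times> nat \<Rightarrow> nat \<times> nat \<Rightarrow> bool" where
  "kpart_E x y \<longleftrightarrow> fst x \<noteq> fst y"

definition fsum :: "(nat \<Rightarrow> nat) \<Rightarrow> nat set \<Rightarrow> nat" where
  "fsum n I = (\<Sum>i\<in>I. n i)"

definition s1 :: "nat \<Rightarrow> (nat \<Rightarrow> nat) \<Rightarrow> nat \<Rightarrow> nat" where
  "s1 t n p = Min {fsum n I | I. I \<subseteq> {1..t} \<and> fsum n I \<ge> p}"

definition qI :: "nat \<Rightarrow> (nat \<Rightarrow> nat) \<Rightarrow> nat \<Rightarrow> nat set \<Rightarrow> nat" where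
  "qI t n p I = nat \<lceil>(real p - real (fsum n I)) / (real t - real (card I) - 1)\<rceil>"

definition Ip :: "nat \<Rightarrow> (nat \<Rightarrow> nat) \<Rightarrow> nat \<Rightarrow> nat set set" where
  "Ip t n p = {I. I \<subset> {1..t} \<and> card I + 2 \<le> t \<and> fsum n I < p \<and>
                  (\<forall>i \<in> {1..t} - I. qI t n p I \<le> n i)}"

definition s2 :: "nat \<Rightarrow> (nat \<Rightarrow> nat) \<Rightarrow> nat \<Rightarrow> enat" where
  "s2 t n p = (if Ip t n p = {} then \<infinity> else enat (Min (qI t n p ` Ip t n p)))"

end

theory Submission
  imports Defs
begin

text \<open>In \<open>K\<^sub>n\<^sub>1\<^sub>,\<^sub>\<dots>\<^sub>,\<^sub>n\<^sub>t\<close> a set \<open>S\<close> is \<open>p\<close>-dominating iff its profile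
  \<open>b i = |S \<inter> V\<^sub>i|\<close> satisfies: every part that is not entirely in \<open>S\<close> sees at least \<open>p\<close>
  vertices of \<open>S\<close> in the other parts. So \<open>\<gamma>\<^sub>p\<close> is the least \<open>\<Sum>b\<close> over such profiles.
  Filling a set \<open>I\<close> of parts completely gives the value \<open>f(I) \<ge> p\<close>, hence \<open>s\<^sub>1\<close>;
  filling \<open>I \<in> \<I>\<^sub>p\<close> completely and putting at most \<open>q = \<lceil>(p - f(I))/(t - |I| - 1)\<rceil>\<close>
  vertices into each remaining part gives \<open>p + q\<close>, hence \<open>p + s\<^sub>2\<close>.
  Conversely, for an optimal profile of size \<open>p + m\<close> let \<open>I\<close> be its full parts: every other part
  holds at most \<open>m\<close> vertices. Adding to \<open>I\<close> the parts with \<open>n\<^sub>j < q(I)\<close> one at a time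
  preserves this and ends either with \<open>f(I) \<ge> p\<close> or with \<open>I \<in> \<I>\<^sub>p\<close> and \<open>q(I) \<le> m\<close>.\<close>

lemma exists_bounded_sum_eq:
  fixes c :: "'a \<Rightarrow> nat"
  assumes "finite K" "T \<le> sum c K"
  shows "\<exists>a. (\<forall>i\<in>K. a i \<le> c i) \<and> sum a K = T"
  using assms
proof (induction K arbitrary: T rule: finite_induct)
  case empty
  then show ?case by auto
next
  case (insert x K)
  have "T - min T (c x) \<le> sum c K" using insert by auto
  then obtain a where a: "\<forall>i\<in>K. a i \<le> c i" "sum a K = T - min T (c x)"
    using insert.IH by blast
  let ?a = "a(x := min T (c x))"
  have "sum ?a K = sum a K" using insert(2) by (intro sum.cong) auto
  hence "sum ?a (insert x K) = T" using insert(1,2) a by simp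
  moreover have "\<forall>i\<in>insert x K. ?a i \<le> c i" using a by auto
  ultimately show ?case by blast
qed

lemma finite_card_p_dominating:
  assumes "finite V"
  shows "finite {card S | S. p_dominating V E p S}"
proof -
  have "{card S | S. p_dominating V E p S} \<subseteq> card ` Pow V"
    unfolding p_dominating_def by auto
  then show ?thesis using assms finite_subset by blast
qed

lemma gamma_p_le:
  assumes "finite V" "p_dominating V E p S"
  shows "gamma_p V E p \<le> card S"
  unfolding gamma_p_def using assms finite_card_p_dominating by (intro Min_le) auto

lemma gamma_p_attained:
  assumes "finite V"
  obtains S where "p_dominating V E p S" "gamma_p V E p = card S"
proof -
  have "p_dominating V E p V" unfolding p_dominating_def by auto
  then have "gamma_p V E p \<in> {card S | S. p_dominating V E p S}"
    unfolding gamma_p_def using assms finite_card_p_dominating by (intro Min_in) auto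
  then show ?thesis using that by auto
qed

subsection \<open>Dominating sets of complete multipartite graphs\<close>

definition dominating_profile :: "nat \<Rightarrow> (nat \<Rightarrow> nat) \<Rightarrow> nat \<Rightarrow> (nat \<Rightarrow> nat) \<Rightarrow> bool" where
  "dominating_profile t n p b \<longleftrightarrow>
     (\<forall>i\<in>{1..t}. b i \<le> n i \<and> (b i < n i \<longrightarrow> p \<le> (\<Sum>k\<in>{1..t} - {i}. b k)))"

lemma kpart_V_eq_Sigma: "kpart_V t n = Sigma {1..t} (\<lambda>i. {..<n i})"
  unfolding kpart_V_def by auto

lemma finite_kpart_V: "finite (kpart_V t n)"
  unfolding kpart_V_eq_Sigma by auto

lemma kpart_subset_eq_Sigma:
  assumes "S \<subseteq> kpart_V t n"
  shows "S = Sigma {1..t} (\<lambda>i. S `` {i})"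
  using assms unfolding kpart_V_def by auto

lemma kpart_Image_subset:
  assumes "S \<subseteq> kpart_V t n"
  shows "S `` {i} \<subseteq> {..<n i}"
  using assms unfolding kpart_V_def by auto

lemma card_kpart_Sigma:
  assumes "S \<subseteq> kpart_V t n" "finite A"
  shows "card (Sigma A (\<lambda>i. S `` {i})) = (\<Sum>k\<in>A. card (S `` {k}))"
  using assms kpart_Image_subset[OF assms(1)] by (intro card_SigmaI) (auto intro: finite_subset)

lemma card_kpart_neighbours:
  assumes "S \<subseteq> kpart_V t n"
  shows "card {u \<in> S. kpart_E (i, j) u} = (\<Sum>k\<in>{1..t} - {i}. card (S `` {k}))"
proof -
  have "{u \<in> S. kpart_E (i, j) u} = Sigma ({1..t} - {i}) (\<lambda>k. S `` {k})"
    using kpart_subset_eq_Sigma[OF assms] unfolding kpart_E_def by auto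
  then show ?thesis using card_kpart_Sigma[OF assms] by simp
qed

lemma p_dominating_kpart_iff:
  assumes "S \<subseteq> kpart_V t n"
  shows "p_dominating (kpart_V t n) kpart_E p S \<longleftrightarrow>
    dominating_profile t n p (\<lambda>i. card (S `` {i}))"
proof -
  have le: "card (S `` {i}) \<le> n i" for i
    using card_mono[OF _ kpart_Image_subset[OF assms]] by simp
  have lt_iff: "card (S `` {i}) < n i \<longleftrightarrow> (\<exists>j<n i. (i, j) \<notin> S)" for i
  proof
    assume "card (S `` {i}) < n i"
    then have "S `` {i} \<noteq> {..<n i}" by (metis card_lessThan less_irrefl)
    then show "\<exists>j<n i. (i, j) \<notin> S" using kpart_Image_subset[OF assms, of i] by auto
  next
    assume "\<exists>j<n i. (i, j) \<notin> S"
    then have "S `` {i} \<subset> {..<n i}" using kpart_Image_subset[OF assms, of i] by auto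
    then show "card (S `` {i}) < n i" using psubset_card_mono[of "{..<n i}"] by simp
  qed
  have "(\<forall>v\<in>kpart_V t n - S. p \<le> card {u \<in> S. kpart_E v u}) \<longleftrightarrow>
      (\<forall>i\<in>{1..t}. \<forall>j<n i. (i, j) \<notin> S \<longrightarrow> p \<le> card {u \<in> S. kpart_E (i, j) u})"
    unfolding kpart_V_def by blast
  also have "\<dots> \<longleftrightarrow>
      (\<forall>i\<in>{1..t}. (\<exists>j<n i. (i, j) \<notin> S) \<longrightarrow> p \<le> (\<Sum>k\<in>{1..t} - {i}. card (S `` {k})))"
    by (simp add: card_kpart_neighbours[OF assms]) blast
  finally show ?thesis
    using assms le lt_iff unfolding p_dominating_def dominating_profile_def by auto
qed

lemma gamma_p_kpart_le:
  assumes "dominating_profile t n p b"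
  shows "gamma_p (kpart_V t n) kpart_E p \<le> (\<Sum>i\<in>{1..t}. b i)"
proof -
  let ?S = "Sigma {1..t} (\<lambda>i. {..<b i})"
  have sub: "?S \<subseteq> kpart_V t n"
    using assms unfolding dominating_profile_def kpart_V_def by force
  have "?S `` {i} = {..<b i}" if "i \<in> {1..t}" for i using that by auto
  then have "dominating_profile t n p (\<lambda>i. card (?S `` {i}))"
    using assms unfolding dominating_profile_def by simp
  then have "p_dominating (kpart_V t n) kpart_E p ?S"
    using p_dominating_kpart_iff[OF sub] by blast
  then have "gamma_p (kpart_V t n) kpart_E p \<le> card ?S"
    by (rule gamma_p_le[OF finite_kpart_V])
  then show ?thesis by (simp add: card_SigmaI)
qed

lemma gamma_p_kpart_attained:
  obtains b where "dominating_profile t n p b"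
    "gamma_p (kpart_V t n) kpart_E p = (\<Sum>i\<in>{1..t}. b i)"
proof -
  obtain S where S: "p_dominating (kpart_V t n) kpart_E p S"
    "gamma_p (kpart_V t n) kpart_E p = card S"
    using gamma_p_attained[OF finite_kpart_V] .
  have sub: "S \<subseteq> kpart_V t n" using S(1) unfolding p_dominating_def by simp
  have "card S = card (Sigma {1..t} (\<lambda>i. S `` {i}))"
    using kpart_subset_eq_Sigma[OF sub] by (rule arg_cong)
  also have "\<dots> = (\<Sum>i\<in>{1..t}. card (S `` {i}))"
    by (rule card_kpart_Sigma[OF sub]) simp
  finally have "card S = (\<Sum>i\<in>{1..t}. card (S `` {i}))" .
  then show ?thesis using that S p_dominating_kpart_iff[OF sub] by simp
qed

lemma finite_s1_candidates: "finite {fsum n I | I. I \<subseteq> {1..t} \<and> fsum n I \<ge> p}"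
proof -
  have "{fsum n I | I. I \<subseteq> {1..t} \<and> fsum n I \<ge> p} \<subseteq> fsum n ` Pow {1..t}" by auto
  then show ?thesis using finite_subset by blast
qed

lemma s1_le:
  assumes "I \<subseteq> {1..t}" "p \<le> fsum n I"
  shows "s1 t n p \<le> fsum n I"
  unfolding s1_def using assms finite_s1_candidates by (intro Min_le) auto

lemma s1_attained:
  assumes "p \<le> fsum n {1..t}"
  obtains I where "I \<subseteq> {1..t}" "p \<le> fsum n I" "s1 t n p = fsum n I"
proof -
  have "s1 t n p \<in> {fsum n I | I. I \<subseteq> {1..t} \<and> fsum n I \<ge> p}"
    unfolding s1_def using assms finite_s1_candidates by (intro Min_in) auto
  then show ?thesis using that by blast
qed

lemma finite_Ip: "finite (Ip t n p)"
proof -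
  have "Ip t n p \<subseteq> Pow {1..t}" unfolding Ip_def by auto
  then show ?thesis using finite_subset by blast
qed

lemma s2_le:
  assumes "I \<in> Ip t n p"
  shows "s2 t n p \<le> enat (qI t n p I)"
  unfolding s2_def using assms finite_Ip by auto

lemma s2_attained:
  assumes "Ip t n p \<noteq> {}"
  obtains I where "I \<in> Ip t n p" "s2 t n p = enat (qI t n p I)"
proof -
  have "Min (qI t n p ` Ip t n p) \<in> qI t n p ` Ip t n p"
    using assms finite_Ip by (intro Min_in) auto
  then show ?thesis using that assms unfolding s2_def by auto
qed

lemma qI_le:
  assumes "card I + 2 \<le> t" "p - fsum n I \<le> (t - card I - 1) * m"
  shows "qI t n p I \<le> m"
proof -
  let ?d = "real t - real (card I) - 1"
  have d: "?d > 0" using assms(1) by linarith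
  have "real (t - card I - 1) = ?d" using assms(1) by (simp add: of_nat_diff)
  then have "real (p - fsum n I) \<le> ?d * real m"
    using assms(2) by (metis of_nat_le_iff of_nat_mult)
  moreover have "real p - real (fsum n I) \<le> real (p - fsum n I)" by simp
  ultimately have "(real p - real (fsum n I)) / ?d \<le> real m"
    using d by (simp add: divide_le_eq mult.commute)
  then show ?thesis unfolding qI_def by simp
qed

lemma diff_le_mult_qI:
  assumes "card I + 2 \<le> t" "fsum n I < p"
  shows "p - fsum n I \<le> (t - card I - 1) * qI t n p I"
proof -
  let ?d = "real t - real (card I) - 1"
  let ?x = "(real p - real (fsum n I)) / ?d"
  have d: "?d > 0" using assms(1) by linarith
  have d_nat: "real (t - card I - 1) = ?d" using assms(1) by (simp add: of_nat_diff)
  have "real (qI t n p I) = of_int \<lceil>?x\<rceil>"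
    unfolding qI_def using d assms(2) by simp
  then have "?x \<le> real (qI t n p I)" by simp
  then have "real p - real (fsum n I) \<le> ?d * real (qI t n p I)"
    using d by (simp add: divide_le_eq mult.commute)
  then have "real (p - fsum n I) \<le> real ((t - card I - 1) * qI t n p I)"
    using assms(2) d_nat by (simp add: of_nat_diff)
  then show ?thesis by linarith
qed

subsection \<open>Upper bounds\<close>

lemma gamma_p_kpart_le_s1:
  assumes "p \<le> fsum n {1..t}"
  shows "gamma_p (kpart_V t n) kpart_E p \<le> s1 t n p"
proof -
  obtain I where I: "I \<subseteq> {1..t}" "p \<le> fsum n I" "s1 t n p = fsum n I"
    using s1_attained[OF assms] .
  define b where "b i = (if i \<in> I then n i else 0)" for i
  have sum_b: "sum b A = fsum n I" if "I \<subseteq> A" "finite A" for A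
    using that unfolding b_def fsum_def by (simp add: sum.If_cases Int_absorb1)
  have "dominating_profile t n p b"
    unfolding dominating_profile_def
  proof (intro ballI conjI impI)
    fix i assume i: "i \<in> {1..t}"
    show "b i \<le> n i" unfolding b_def by simp
    assume "b i < n i"
    then have "I \<subseteq> {1..t} - {i}" using I(1) unfolding b_def by (auto split: if_splits)
    then show "p \<le> sum b ({1..t} - {i})" using sum_b I(2) by simp
  qed
  then show ?thesis using gamma_p_kpart_le sum_b[OF I(1)] I(3) by fastforce
qed

lemma gamma_p_kpart_le_Ip:
  assumes "I \<in> Ip t n p"
  shows "gamma_p (kpart_V t n) kpart_E p \<le> p + qI t n p I"
proof -
  let ?N = "{1..t}" and ?q = "qI t n p I"
  have I: "I \<subseteq> ?N" "card I + 2 \<le> t" "fsum n I < p" and q_le_n: "\<forall>i\<in>?N - I. ?q \<le> n i"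
    using assms unfolding Ip_def by auto
  have card_rest: "card (?N - I) = t - card I"
    using I(1) by (simp add: card_Diff_subset finite_subset)
  have "t - card I = Suc (t - card I - 1)" using I(2) by arith
  then have "p - fsum n I + ?q \<le> (t - card I) * ?q"
    using diff_le_mult_qI[OF I(2,3)] by simp
  then obtain a where a: "\<forall>i\<in>?N - I. a i \<le> ?q" "sum a (?N - I) = p - fsum n I + ?q"
    using exists_bounded_sum_eq[of "?N - I" _ "\<lambda>_. ?q"] card_rest by auto
  define b where "b i = (if i \<in> I then n i else a i)" for i
  have "sum b ?N = sum b (?N - I) + sum b I" using I(1) by (simp add: sum.subset_diff)
  also have "\<dots> = sum a (?N - I) + fsum n I" unfolding b_def fsum_def by simp
  finally have sum_b: "sum b ?N = p + ?q" using a(2) I(3) by simp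
  have "dominating_profile t n p b"
    unfolding dominating_profile_def
  proof (intro ballI conjI impI)
    fix i assume i: "i \<in> ?N"
    show "b i \<le> n i" using a(1) q_le_n i unfolding b_def by force
    assume "b i < n i"
    then have "b i \<le> ?q" using a(1) i unfolding b_def by (auto split: if_splits)
    moreover have "sum b ?N = b i + sum b (?N - {i})" using i by (simp add: sum.remove)
    ultimately show "p \<le> sum b (?N - {i})" using sum_b by linarith
  qed
  then show ?thesis using gamma_p_kpart_le sum_b by fastforce
qed

lemma gamma_p_kpart_le_p_plus_s2:
  "enat (gamma_p (kpart_V t n) kpart_E p) \<le> enat p + s2 t n p"
proof (cases "Ip t n p = {}")
  case True
  then show ?thesis unfolding s2_def by simp
next
  case False
  then obtain I where "I \<in> Ip t n p" "s2 t n p = enat (qI t n p I)"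
    by (rule s2_attained)
  then show ?thesis using gamma_p_kpart_le_Ip by simp
qed

subsection \<open>The lower bound\<close>

lemma qI_le_of_capped_sum:
  assumes "I \<subseteq> {1..t}" "fsum n I < p"
    and "p + m \<le> fsum n I + (\<Sum>i\<in>{1..t} - I. min m (n i))"
  shows "card I + 2 \<le> t" "qI t n p I \<le> m"
proof -
  let ?k = "card ({1..t} - I)"
  have k: "?k = t - card I" "card I \<le> t"
    using assms(1) card_mono[OF _ assms(1)] by (simp_all add: card_Diff_subset finite_subset)
  have "(\<Sum>i\<in>{1..t} - I. min m (n i)) \<le> ?k * m"
    using sum_bounded_above[of "{1..t} - I" "\<lambda>i. min m (n i)" m] by simp
  then have sum_le: "p + m \<le> fsum n I + ?k * m" using assms(3) by linarith
  have "?k \<ge> 2"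
  proof (rule ccontr)
    assume "\<not> ?k \<ge> 2"
    then have "?k * m \<le> m" by (cases ?k) auto
    then show False using sum_le assms(2) by linarith
  qed
  then show "card I + 2 \<le> t" using k by linarith
  have "p - fsum n I \<le> (?k - 1) * m" using sum_le \<open>?k \<ge> 2\<close> by (simp add: diff_mult_distrib)
  then show "qI t n p I \<le> m" using qI_le \<open>card I + 2 \<le> t\<close> k(1) by simp
qed

text \<open>The induction moves parts \<open>j \<notin> I\<close> with \<open>n\<^sub>j < q(I) \<le> m\<close> into \<open>I\<close>, which keeps the
  hypotheses; when no such part is left, \<open>I \<in> \<I>\<^sub>p\<close>.\<close>

lemma min_s1_s2_le_capped_sum:
  assumes "I \<subseteq> {1..t}" "fsum n I \<le> p + m"
    and "p + m \<le> fsum n I + (\<Sum>i\<in>{1..t} - I. min m (n i))"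
  shows "min (enat (s1 t n p)) (enat p + s2 t n p) \<le> enat (p + m)"
  using assms
proof (induction "card ({1..t} - I)" arbitrary: I rule: less_induct)
  case less
  let ?N = "{1..t}"
  show ?case
  proof (cases "p \<le> fsum n I")
    case True
    then show ?thesis using s1_le[OF less.prems(1) True] less.prems(2) by (simp add: min_le_iff_disj)
  next
    case False
    then have lt: "fsum n I < p" by simp
    note small = qI_le_of_capped_sum[OF less.prems(1) lt less.prems(3)]
    show ?thesis
    proof (cases "\<forall>i\<in>?N - I. qI t n p I \<le> n i")
      case True
      have "card I < card ?N" using small(1) by simp
      then have "I \<subset> ?N" using less.prems(1) by (metis less_irrefl psubsetI)
      then have "I \<in> Ip t n p" unfolding Ip_def using small(1) lt True by blast
      then have "enat p + s2 t n p \<le> enat p + enat (qI t n p I)"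
        by (intro add_left_mono s2_le)
      also have "\<dots> \<le> enat (p + m)" using small(2) by simp
      finally show ?thesis by (simp add: min_le_iff_disj)
    next
      case False
      then obtain j where j: "j \<in> ?N - I" "n j < qI t n p I" by auto
      have fin: "finite I" using less.prems(1) finite_subset by blast
      have f_insert: "fsum n (insert j I) = n j + fsum n I"
        unfolding fsum_def using j fin by simp
      have "?N - insert j I = (?N - I) - {j}" by auto
      moreover have "min m (n j) = n j" using j small(2) by simp
      ultimately have "(\<Sum>i\<in>?N - I. min m (n i)) = n j + (\<Sum>i\<in>?N - insert j I. min m (n i))"
        using sum.remove[OF _ j(1), of "\<lambda>i. min m (n i)"] by simp
      then have "p + m \<le> fsum n (insert j I) + (\<Sum>i\<in>?N - insert j I. min m (n i))"
        using f_insert less.prems(3) by linarith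
      moreover have "card (?N - insert j I) < card (?N - I)"
        using j by (intro psubset_card_mono) blast+
      moreover have "insert j I \<subseteq> ?N" "fsum n (insert j I) \<le> p + m"
        using j less.prems(1) f_insert lt small(2) by auto
      ultimately show ?thesis using less.hyps by blast
    qed
  qed
qed

lemma min_s1_s2_le_profile_sum:
  assumes "dominating_profile t n p b" "p < fsum n {1..t}"
  shows "min (enat (s1 t n p)) (enat p + s2 t n p) \<le> enat (\<Sum>i\<in>{1..t}. b i)"
proof -
  let ?N = "{1..t}"
  have b_le: "b i \<le> n i" and b_lt: "b i < n i \<Longrightarrow> b i + p \<le> sum b ?N" if "i \<in> ?N" for i
    using assms(1) that sum.remove[of ?N i b] unfolding dominating_profile_def by auto
  define I where "I = {i \<in> ?N. b i = n i}"
  have I: "I \<subseteq> ?N" unfolding I_def by auto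
  have "sum b ?N = sum b (?N - I) + sum b I" using I by (simp add: sum.subset_diff)
  then have sum_b: "sum b ?N = fsum n I + sum b (?N - I)"
    unfolding I_def fsum_def by simp
  show ?thesis
  proof (cases "p \<le> fsum n I")
    case True
    then show ?thesis using s1_le[OF I True] sum_b by (simp add: min_le_iff_disj)
  next
    case False
    have rest_lt: "b i < n i" if "i \<in> ?N - I" for i
      using that b_le unfolding I_def by (simp add: order_less_le)
    have "I \<noteq> ?N" using False assms(2) by auto
    then obtain i0 where "i0 \<in> ?N - I" using I by blast
    then have "p \<le> sum b ?N" using b_lt rest_lt by fastforce
    define m where "m = sum b ?N - p"
    have "b i \<le> min m (n i)" if "i \<in> ?N - I" for i
      using b_lt rest_lt b_le that unfolding m_def by force
    then have "sum b (?N - I) \<le> (\<Sum>i\<in>?N - I. min m (n i))" by (rule sum_mono)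
    then show ?thesis
      using min_s1_s2_le_capped_sum[OF I, where p = p and m = m] sum_b False \<open>p \<le> sum b ?N\<close>
      unfolding m_def by simp
  qed
qed

theorem theorem9:
  fixes p t :: nat and n :: "nat \<Rightarrow> nat"
  assumes "p \<ge> 1" and "t \<ge> 2"
    and "\<forall>i \<in> {1..t}. n i > 0"
    and "fsum n {1..t} > p"
  shows "enat (gamma_p (kpart_V t n) kpart_E p) = min (enat (s1 t n p)) (enat p + s2 t n p)"
  \<comment> \<open>Only \<open>f(N\<^sub>t) > p\<close> is needed; the other hypotheses merely describe the paper's setting.\<close>
proof (rule antisym)
  show "enat (gamma_p (kpart_V t n) kpart_E p) \<le> min (enat (s1 t n p)) (enat p + s2 t n p)"
    using gamma_p_kpart_le_s1 gamma_p_kpart_le_p_plus_s2 assms(4) by simp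
  obtain b where "dominating_profile t n p b"
    "gamma_p (kpart_V t n) kpart_E p = (\<Sum>i\<in>{1..t}. b i)"
    by (rule gamma_p_kpart_attained)
  then show "min (enat (s1 t n p)) (enat p + s2 t n p) \<le> enat (gamma_p (kpart_V t n) kpart_E p)"
    using min_s1_s2_le_profile_sum assms(4) by simp
qed

end
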